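(* Let $S$ be a Stone relation algebra that is atomic, atom-rectangular and simple, and has finitely many atoms. Then $S$ is a relation algebra, that is, $\overline{\overline{x}}=x$ for all $x\in S$.
   Context: A Stone relation algebra is a structure $(S,\sqcup,\sqcap,\cdot,\overline{\,\cdot\,},{}^{\smile},\bot,\top,1)$ (write $xy$ for $x\cdot y$, $\overline{x}$ for the pseudocomplement, $x^{\smile}$ for the converse) such that: $(S,\sqcup,\sqcap,\bot,\top)$ is a bounded distributive lattice with order $x\sqsubseteq y\iff x\sqcup y=y$; $x\sqcap y=\bot\iff x\sqsubseteq\overline{y}$; $\overline{x}\sqcup\overline{\overline{x}}=\top$; $\cdot$ is associative with two-sided unit $1$, distributes over $\sqcup$ on both sides, and $\bot$ is a zero of $\cdot$; $x^{\smile\smile}=x$, $(xy)^{\smile}=y^{\smile}x^{\smile}$, $(x\sqcup y)^{\smile}=x^{\smile}\sqcup y^{\smile}$; $\overline{\overline{1}}=1$; $\overline{\overline{xy}}=\overline{\overline{x}}\,\overline{\overline{y}}$; $xy\sqcap z\sqsubseteq x(y\sqcap x^{\smile}z)$. A relation algebra is a Stone relation algebra with $\overline{\overline{x}}=x$ for all $x$. An atom is an element $x\neq\bot$ such that $\bot\neq y\sqsubseteq x$ implies $y=x$. An element $x$ is a rectangle if $x\top x\sqsubseteq x$ and simple if $\top x\top=\top$. $S$ is simple if every element other than $\bot$ is simple; atomic if every $x\neq\bot$ has an atom below it; atom-rectangular if every atom is a rectangle. *)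

theory Defs
  imports Main
begin

text \<open>The lattice operations are sup, inf, bot, top
with the lattice order (x \<le> y iff sup x y = y); composition is times,
the identity is one, the pseudocomplement is uminus and the converse is conv.\<close>

class conv =
  fixes conv :: "'a \<Rightarrow> 'a"

class stone_relation_algebra = bounded_lattice + distrib_lattice + times + one + uminus + conv +
  assumes pseudo_complement: "inf x y = bot \<longleftrightarrow> x \<le> - y"
  assumes stone: "sup (- x) (-(-x)) = top"
  assumes comp_assoc: "(x * y) * z = x * (y * z)"
  assumes comp_left_one: "1 * x = x"
  assumes comp_right_one: "x * 1 = x"
  assumes comp_left_dist_sup: "x * sup y z = sup (x * y) (x * z)"
  assumes comp_right_dist_sup: "sup x y * z = sup (x * z) (y * z)"
  assumes comp_left_zero: "bot * x = bot"
  assumes comp_right_zero: "x * bot = bot"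
  assumes conv_involutive: "conv (conv x) = x"
  assumes conv_dist_comp: "conv (x * y) = conv y * conv x"
  assumes conv_dist_sup: "conv (sup x y) = sup (conv x) (conv y)"
  assumes pp_one: "-(-(1::'a)) = 1"
  assumes pp_dist_comp: "-(-(x * y)) = (-(-x)) * (-(-y))"
  assumes dedekind_1: "inf (x * y) z \<le> x * inf y (conv x * z)"

definition atom :: "'a::stone_relation_algebra \<Rightarrow> bool" where
  "atom x \<longleftrightarrow> x \<noteq> bot \<and> (\<forall>y. y \<noteq> bot \<and> y \<le> x \<longrightarrow> y = x)"

definition rectangle :: "'a::stone_relation_algebra \<Rightarrow> bool" where
  "rectangle x \<longleftrightarrow> x * top * x \<le> x"

definition simple_elem :: "'a::stone_relation_algebra \<Rightarrow> bool" where
  "simple_elem x \<longleftrightarrow> top * x * top = top"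

definition simple_algebra :: "'a::stone_relation_algebra itself \<Rightarrow> bool" where
  "simple_algebra _ \<longleftrightarrow> (\<forall>x::'a. x \<noteq> bot \<longrightarrow> simple_elem x)"

definition atomic :: "'a::stone_relation_algebra itself \<Rightarrow> bool" where
  "atomic _ \<longleftrightarrow> (\<forall>x::'a. x \<noteq> bot \<longrightarrow> (\<exists>a. atom a \<and> a \<le> x))"

definition atom_rectangular :: "'a::stone_relation_algebra itself \<Rightarrow> bool" where
  "atom_rectangular _ \<longleftrightarrow> (\<forall>a::'a. atom a \<longrightarrow> rectangle a)"

end

theory Submission
  imports Defs
begin

text \<open>Call x regular if --x = x. Every rectangle a equals (dom a) * top * (cod a), where
dom a = inf 1 (a * conv a) and cod a = inf 1 (conv a * a). The domain and codomain of an atom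
are coreflexive atoms, hence simple rectangles, and a coreflexive simple rectangle p is
regular: q = --p is again a coreflexive rectangle, and by simplicity
q = (q * top * p) * top * q, where q * top * p and p * top * q lie below p, being coreflexive
and having p as a factor. Since pp distributes over composition, every atom is then regular.
The finitely many regular atoms have a regular join s, whose pseudocomplement contains no
atom; so s = top by atomicity. Finally every atom lies below x or below -x, whence
sup x (-x) = top and x is regular.\<close>

lemma pp_increasing: "(x::'a::stone_relation_algebra) \<le> -(-x)"
  using pseudo_complement [of "- x" x] pseudo_complement [of x "- x"] by (simp add: inf_commute)

lemma inf_p: "inf (x::'a::stone_relation_algebra) (- x) = bot"
  by (simp add: pseudo_complement pp_increasing)

lemma p_inf: "inf (- (x::'a::stone_relation_algebra)) x = bot"
  by (simp add: inf_commute inf_p)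

lemma p_antitone:
  fixes x :: "'a::stone_relation_algebra"
  assumes "x \<le> y"
  shows "- y \<le> - x"
proof -
  have "inf (- y) x \<le> inf (- y) y"
    using assms by (simp add: inf.coboundedI2)
  then have "inf (- y) x = bot"
    by (simp add: p_inf bot_unique)
  then show ?thesis
    by (simp add: pseudo_complement)
qed

lemma pp_isotone: "(x::'a::stone_relation_algebra) \<le> y \<Longrightarrow> -(-x) \<le> -(-y)"
  by (simp add: p_antitone)

lemma p_bot: "- (bot::'a::stone_relation_algebra) = top"
  using pseudo_complement [of top bot] by (simp add: top_unique)

lemma p_top: "- (top::'a::stone_relation_algebra) = bot"
  using p_inf [of top] by simp

lemma pp_top: "-(-(top::'a::stone_relation_algebra)) = top"
  by (simp add: p_top p_bot)

lemma p_dist_sup: "- sup (x::'a::stone_relation_algebra) y = inf (- x) (- y)"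
proof (rule order.antisym)
  show "- sup x y \<le> inf (- x) (- y)"
    by (simp add: p_antitone)
  have "inf (inf (- x) (- y)) x \<le> inf (- x) x" and "inf (inf (- x) (- y)) y \<le> inf (- y) y"
    by (simp_all add: inf.coboundedI1 inf.coboundedI2)
  then have "inf (inf (- x) (- y)) (sup x y) = bot"
    by (simp add: inf_sup_distrib1 p_inf bot_unique)
  then show "inf (- x) (- y) \<le> - sup x y"
    by (simp add: pseudo_complement)
qed

lemma regular_if_complemented:
  fixes x :: "'a::stone_relation_algebra"
  assumes "sup x (- x) = top"
  shows "-(-x) = x"
proof -
  have "-(-x) = inf (-(-x)) (sup x (- x))"
    using assms by simp
  also have "\<dots> = sup (inf (-(-x)) x) (inf (-(-x)) (- x))"
    by (rule inf_sup_distrib1)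
  also have "\<dots> = x"
    by (simp add: p_inf inf.absorb2 pp_increasing)
  finally show ?thesis .
qed

lemma regular_sup:
  fixes x :: "'a::stone_relation_algebra"
  assumes "-(-x) = x" and "-(-y) = y"
  shows "-(-(sup x y)) = sup x y"
proof -
  have "sup x (- x) = top" and "sup y (- y) = top"
    using assms stone [of x] stone [of y] by (simp_all add: sup_commute)
  then have "sup (sup x y) (- x) = top" and "sup (sup x y) (- y) = top"
    by (simp_all add: sup.assoc sup.left_commute [of x y] sup.commute [of y "- y"])
  then have "sup (sup x y) (inf (- x) (- y)) = top"
    by (simp add: sup_inf_distrib1)
  then have "sup (sup x y) (- sup x y) = top"
    by (simp only: p_dist_sup)
  then show ?thesis
    by (rule regular_if_complemented)
qed

lemma atom_below_eq:
  fixes a :: "'a::stone_relation_algebra"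
  assumes "atom a" and "y \<noteq> bot" and "y \<le> a"
  shows "y = a"
  using assms by (simp add: atom_def)

lemma atom_le_sup_p:
  fixes a :: "'a::stone_relation_algebra"
  assumes "atom a"
  shows "a \<le> sup x (- x)"
proof (cases "inf a x = bot")
  case True
  then show ?thesis
    by (simp add: pseudo_complement le_supI2)
next
  case False
  then have "inf a x = a"
    using assms by (simp add: atom_below_eq)
  then have "a \<le> x"
    by (simp add: le_iff_inf)
  then show ?thesis
    by (rule le_supI1)
qed

lemma regular_finite_join:
  fixes A :: "'a::stone_relation_algebra set"
  assumes "finite A" and "\<forall>a\<in>A. -(-a) = a"
  shows "\<exists>s. -(-s) = s \<and> (\<forall>a\<in>A. a \<le> s) \<and> (\<forall>u. (\<forall>a\<in>A. a \<le> u) \<longrightarrow> s \<le> u)"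
  using assms
proof (induction A rule: finite_induct)
  case empty
  show ?case
    by (rule exI [of _ bot]) (simp add: p_bot p_top)
next
  case (insert b A)
  then obtain s where "-(-s) = s" and "\<forall>a\<in>A. a \<le> s" and "\<forall>u. (\<forall>a\<in>A. a \<le> u) \<longrightarrow> s \<le> u"
    by auto
  with insert.prems show ?case
    by (intro exI [of _ "sup b s"]) (auto simp add: regular_sup le_supI2)
qed

lemma comp_left_isotone: "(x::'a::stone_relation_algebra) \<le> y \<Longrightarrow> z * x \<le> z * y"
  by (simp add: le_iff_sup comp_left_dist_sup [symmetric])

lemma comp_right_isotone: "(x::'a::stone_relation_algebra) \<le> y \<Longrightarrow> x * z \<le> y * z"
  by (simp add: le_iff_sup comp_right_dist_sup [symmetric])

lemma comp_isotone: "(w::'a::stone_relation_algebra) \<le> x \<Longrightarrow> y \<le> z \<Longrightarrow> w * y \<le> x * z"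
  by (rule order.trans [OF comp_right_isotone comp_left_isotone])

lemma conv_isotone: "(x::'a::stone_relation_algebra) \<le> y \<Longrightarrow> conv x \<le> conv y"
  by (simp add: le_iff_sup conv_dist_sup [symmetric])

lemma conv_order: "conv (x::'a::stone_relation_algebra) \<le> y \<longleftrightarrow> x \<le> conv y"
  using conv_isotone [of "conv x" y] conv_isotone [of x "conv y"] by (auto simp add: conv_involutive)

lemma conv_bot: "conv (bot::'a::stone_relation_algebra) = bot"
  using conv_order [of bot bot] by (simp add: bot_unique)

lemma conv_eq_bot_iff: "conv (x::'a::stone_relation_algebra) = bot \<longleftrightarrow> x = bot"
  by (metis conv_bot conv_involutive)

lemma conv_dist_inf: "conv (inf (x::'a::stone_relation_algebra) y) = inf (conv x) (conv y)"
proof (rule order.antisym)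
  show "conv (inf x y) \<le> inf (conv x) (conv y)"
    by (simp add: conv_isotone)
  have "conv (inf (conv x) (conv y)) \<le> inf x y"
    using conv_isotone [of "inf (conv x) (conv y)" "conv x"] conv_isotone [of "inf (conv x) (conv y)" "conv y"]
    by (simp add: conv_involutive)
  then show "inf (conv x) (conv y) \<le> conv (inf x y)"
    by (simp only: conv_order)
qed

lemma dedekind_2: "inf ((x::'a::stone_relation_algebra) * y) z \<le> inf x (z * conv y) * y"
proof -
  have "conv (inf (x * y) z) \<le> conv (inf x (z * conv y) * y)"
    using dedekind_1 [of "conv y" "conv x" "conv z"]
    by (simp add: conv_dist_inf conv_dist_comp conv_involutive)
  then show ?thesis
    by (simp add: conv_order conv_involutive)
qed

lemma le_comp_conv_comp: "(x::'a::stone_relation_algebra) \<le> x * conv x * x"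
  using dedekind_1 [of x 1 x] comp_left_isotone [of "inf 1 (conv x * x)" "conv x * x" x]
  by (simp add: comp_right_one comp_assoc)

lemma le_comp_top_comp: "(x::'a::stone_relation_algebra) \<le> x * top * x"
  using le_comp_conv_comp [of x] by (rule order.trans) (intro comp_isotone order_refl top_greatest)

lemma coreflexive_comp_left_le: "(p::'a::stone_relation_algebra) \<le> 1 \<Longrightarrow> p * x \<le> x"
  using comp_right_isotone [of p 1 x] by (simp add: comp_left_one)

lemma coreflexive_symmetric:
  fixes p :: "'a::stone_relation_algebra"
  assumes "p \<le> 1"
  shows "conv p = p"
proof -
  have "p \<le> p * conv p * p"
    by (rule le_comp_conv_comp)
  also have "\<dots> \<le> 1 * conv p * 1"
    using assms by (intro comp_isotone order_refl)
  finally have "p \<le> conv p"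
    by (simp add: comp_left_one comp_right_one)
  then show ?thesis
    using conv_order [of p p] by (simp add: order.antisym)
qed

lemma coreflexive_inf_one_comp_right:
  fixes p :: "'a::stone_relation_algebra"
  assumes "p \<le> 1"
  shows "inf (x * p) 1 \<le> p"
proof -
  have "inf (x * p) 1 \<le> inf x (1 * conv p) * p"
    by (rule dedekind_2)
  also have "\<dots> \<le> p * p"
    using assms by (simp add: comp_left_one coreflexive_symmetric comp_right_isotone)
  also have "\<dots> \<le> p"
    using assms by (rule coreflexive_comp_left_le)
  finally show ?thesis .
qed

lemma coreflexive_inf_one_comp_left:
  fixes p :: "'a::stone_relation_algebra"
  assumes "p \<le> 1"
  shows "inf (p * x) 1 \<le> p"
proof -
  have "inf (p * x) 1 \<le> p * inf x (conv p * 1)"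
    by (rule dedekind_1)
  also have "\<dots> \<le> p * p"
    using assms by (simp add: comp_right_one coreflexive_symmetric comp_left_isotone)
  also have "\<dots> \<le> p"
    using assms by (rule coreflexive_comp_left_le)
  finally show ?thesis .
qed

lemma le_domain_comp: "(x::'a::stone_relation_algebra) \<le> inf 1 (x * conv x) * x"
  using dedekind_2 [of 1 x x] by (simp add: comp_left_one)

lemma le_comp_codomain: "(x::'a::stone_relation_algebra) \<le> x * inf 1 (conv x * x)"
  using dedekind_1 [of x 1 x] by (simp add: comp_right_one)

lemma rectangle_inf_top_comp_le:
  fixes x :: "'a::stone_relation_algebra"
  assumes "rectangle x"
  shows "inf (x * top) (top * x) \<le> x"
proof -
  have "inf (x * top) (top * x) \<le> x * inf top (conv x * (top * x))"
    by (rule dedekind_1)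
  also have "\<dots> = x * (conv x * top * x)"
    by (simp add: comp_assoc)
  also have "\<dots> \<le> x * (top * x)"
    by (intro comp_left_isotone comp_right_isotone top_greatest)
  also have "\<dots> \<le> x"
    using assms by (simp add: rectangle_def comp_assoc)
  finally show ?thesis .
qed

lemma rectangle_domain_top_codomain:
  fixes a :: "'a::stone_relation_algebra"
  assumes "rectangle a"
  shows "a = inf 1 (a * conv a) * top * inf 1 (conv a * a)"
proof (rule order.antisym)
  let ?p = "inf 1 (a * conv a)" and ?r = "inf 1 (conv a * a)"
  have "a \<le> ?p * a"
    by (rule le_domain_comp)
  also have "\<dots> \<le> ?p * (a * ?r)"
    by (intro comp_left_isotone le_comp_codomain)
  also have "\<dots> \<le> ?p * top * ?r"
    by (simp add: comp_assoc comp_left_isotone comp_right_isotone)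
  finally show "a \<le> ?p * top * ?r" .
  have "?p * top * ?r \<le> a * conv a * top * top"
    by (intro comp_isotone inf_le2 order_refl top_greatest)
  also have "\<dots> \<le> a * top"
    by (simp add: comp_assoc comp_left_isotone)
  finally have "?p * top * ?r \<le> a * top" .
  moreover have "?p * top * ?r \<le> top * a"
  proof -
    have "?p * top * ?r \<le> top * top * (conv a * a)"
      by (intro comp_isotone inf_le2 order_refl top_greatest)
    also have "\<dots> \<le> top * a"
      by (simp add: comp_assoc [symmetric] comp_right_isotone)
    finally show ?thesis .
  qed
  ultimately have "?p * top * ?r \<le> inf (a * top) (top * a)"
    by simp
  then show "?p * top * ?r \<le> a"
    using rectangle_inf_top_comp_le [OF assms] by (rule order.trans)
qed

lemma atom_conv:
  fixes a :: "'a::stone_relation_algebra"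
  assumes "atom a"
  shows "atom (conv a)"
  unfolding atom_def
proof (intro conjI allI impI)
  show "conv a \<noteq> bot"
    using assms by (simp add: atom_def conv_eq_bot_iff)
  fix y
  assume "y \<noteq> bot \<and> y \<le> conv a"
  then have "conv y = a"
    using assms by (auto simp add: atom_def conv_order conv_eq_bot_iff)
  then show "y = conv a"
    using conv_involutive [of y] by simp
qed

lemma atom_domain:
  fixes a :: "'a::stone_relation_algebra"
  assumes "atom a"
  shows "atom (inf 1 (a * conv a))"
  unfolding atom_def
proof (intro conjI allI impI)
  let ?p = "inf 1 (a * conv a)"
  show "?p \<noteq> bot"
    using assms le_domain_comp [of a] by (auto simp add: atom_def comp_left_zero bot_unique)
  fix y
  assume "y \<noteq> bot \<and> y \<le> ?p"
  then have "y \<noteq> bot" and "y \<le> ?p"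
    by simp_all
  then have "y \<le> 1" and "y \<le> a * conv a"
    by simp_all
  have "y \<le> inf (a * conv a) y"
    using \<open>y \<le> a * conv a\<close> by simp
  also have "\<dots> \<le> a * inf (conv a) (conv a * y)"
    by (rule dedekind_1)
  also have "\<dots> \<le> a * conv (y * a)"
    using \<open>y \<le> 1\<close> by (simp add: conv_dist_comp coreflexive_symmetric comp_left_isotone)
  finally have "y * a \<noteq> bot"
    using \<open>y \<noteq> bot\<close> by (auto simp add: conv_bot comp_right_zero bot_unique)
  moreover have "y * a \<le> a"
    using \<open>y \<le> 1\<close> by (rule coreflexive_comp_left_le)
  ultimately have "y * a = a"
    using assms by (simp add: atom_below_eq)
  then have "?p \<le> inf (y * (a * conv a)) 1"
    by (simp add: comp_assoc [symmetric] inf_commute)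
  also have "\<dots> \<le> y"
    using \<open>y \<le> 1\<close> by (rule coreflexive_inf_one_comp_left)
  finally show "y = ?p"
    using \<open>y \<le> ?p\<close> by simp
qed

lemma rectangle_pp:
  fixes x :: "'a::stone_relation_algebra"
  assumes "rectangle x"
  shows "rectangle (-(-x))"
proof -
  have "-(-x) * top * -(-x) = -(-(x * top * x))"
    by (simp add: pp_dist_comp pp_top)
  also have "\<dots> \<le> -(-x)"
    using assms by (simp add: rectangle_def pp_isotone)
  finally show ?thesis
    by (simp add: rectangle_def)
qed

lemma coreflexive_simple_rectangle_regular:
  fixes p :: "'a::stone_relation_algebra"
  assumes "p \<le> 1" and "rectangle p" and "simple_elem p"
  shows "-(-p) = p"
proof -
  let ?q = "-(-p)"
  have "?q \<le> 1"
    using pp_isotone [OF assms(1)] by (simp add: pp_one)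
  have "?q * top * ?q \<le> ?q"
    using rectangle_pp [OF assms(2)] by (simp add: rectangle_def)
  then have "?q * top * ?q \<le> 1"
    using \<open>?q \<le> 1\<close> by simp
  have "?q * top * p \<le> p"
  proof -
    have "?q * top * p \<le> ?q * top * ?q"
      by (simp add: comp_left_isotone pp_increasing)
    then have "?q * top * p \<le> inf (?q * top * p) 1"
      using \<open>?q * top * ?q \<le> 1\<close> by simp
    also have "\<dots> \<le> p"
      using assms(1) by (rule coreflexive_inf_one_comp_right)
    finally show ?thesis .
  qed
  have "p * top * ?q \<le> p"
  proof -
    have "p * top * ?q \<le> ?q * top * ?q"
      by (simp add: comp_right_isotone pp_increasing)
    then have "p * top * ?q \<le> inf (p * (top * ?q)) 1"
      using \<open>?q * top * ?q \<le> 1\<close> by (simp add: comp_assoc)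
    also have "\<dots> \<le> p"
      using assms(1) by (rule coreflexive_inf_one_comp_left)
    finally show ?thesis .
  qed
  have "?q \<le> ?q * top * ?q"
    by (rule le_comp_top_comp)
  also have "\<dots> = (?q * top * p) * top * ?q"
    using assms(3) by (simp add: simple_elem_def comp_assoc)
  also have "\<dots> \<le> p * top * ?q"
    by (rule comp_right_isotone [OF comp_right_isotone [OF \<open>?q * top * p \<le> p\<close>]])
  also have "\<dots> \<le> p"
    by (rule \<open>p * top * ?q \<le> p\<close>)
  finally show ?thesis
    using pp_increasing order.antisym by blast
qed

lemma atom_regular:
  assumes "atom_rectangular TYPE('a::stone_relation_algebra)" and "simple_algebra TYPE('a)"
    and "atom (a::'a)"
  shows "-(-a) = a"
proof -
  have coreflexive_atom_regular: "-(-p) = p" if "atom p" and "p \<le> 1" for p :: 'a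
  proof (rule coreflexive_simple_rectangle_regular [OF \<open>p \<le> 1\<close>])
    show "rectangle p"
      using assms(1) \<open>atom p\<close> by (simp add: atom_rectangular_def)
    have "p \<noteq> bot"
      using \<open>atom p\<close> by (simp add: atom_def)
    then show "simple_elem p"
      using assms(2) by (simp add: simple_algebra_def)
  qed
  let ?p = "inf 1 (a * conv a)" and ?r = "inf 1 (conv a * a)"
  have "-(-?p) = ?p"
    using assms(3) by (simp add: atom_domain coreflexive_atom_regular)
  moreover have "-(-?r) = ?r"
    using atom_domain [OF atom_conv [OF assms(3)]] by (simp add: conv_involutive coreflexive_atom_regular)
  ultimately have "-(-(?p * top * ?r)) = ?p * top * ?r"
    by (simp only: pp_dist_comp pp_top)
  moreover have "a = ?p * top * ?r"
    using assms(1,3) by (simp add: atom_rectangular_def rectangle_domain_top_codomain)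
  ultimately show ?thesis
    by (simp only: eq_commute)
qed

lemma atoms_upper_bound_eq_top:
  fixes u :: "'a::stone_relation_algebra"
  assumes "atomic TYPE('a)" and "finite {a::'a. atom a}"
    and "\<forall>a::'a. atom a \<longrightarrow> -(-a) = a" and "\<forall>a. atom a \<longrightarrow> a \<le> u"
  shows "u = top"
proof -
  have "\<forall>a\<in>{a::'a. atom a}. -(-a) = a"
    using assms(3) by simp
  then obtain s where "-(-s) = s" and upper: "\<forall>a\<in>{a::'a. atom a}. a \<le> s"
    and least: "\<forall>v. (\<forall>a\<in>{a::'a. atom a}. a \<le> v) \<longrightarrow> s \<le> v"
    using regular_finite_join [OF assms(2)] by blast
  have "s \<le> u"
    by (rule least [rule_format]) (simp add: assms(4))
  have "- s = bot"
  proof (rule ccontr)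
    assume "- s \<noteq> bot"
    then obtain c where "atom c" and "c \<le> - s"
      using assms(1) by (auto simp add: atomic_def)
    then have "c \<le> inf s (- s)"
      using upper by simp
    then show False
      using \<open>atom c\<close> by (simp add: inf_p atom_def bot_unique)
  qed
  then have "s = top"
    using \<open>-(-s) = s\<close> by (simp add: p_bot)
  then show ?thesis
    using \<open>s \<le> u\<close> by (simp add: top_unique)
qed

theorem mainTheorem6:
  assumes "atomic TYPE('a::stone_relation_algebra)"
    and "atom_rectangular TYPE('a)"
    and "simple_algebra TYPE('a)"
    and "finite {a::'a. atom a}"
  shows "\<forall>x::'a. -(-x) = x"
proof
  fix x :: 'a
  have "\<forall>a::'a. atom a \<longrightarrow> -(-a) = a"
    using assms(2,3) atom_regular by blast
  then have "sup x (- x) = top"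
    using assms(1,4) atom_le_sup_p atoms_upper_bound_eq_top by blast
  then show "-(-x) = x"
    by (rule regular_if_complemented)
qed

end
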